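(* Let $P=\{p_1,\dots,p_n\}$ be weighted points in $\mathbb{R}^2$ with total weight $1$, let $S=\{s_1,\dots,s_m\}$ be line segments in $\mathbb{R}^2$ of total length $1$, and let $0<\delta\le\frac14$. Let $\tau$ be the transport plan produced by the construction described in the context, and let $\tau^*$ be an optimal transport plan between $P$ and $S$. Then $\|\tau\|\le(1+17\delta)\|\tau^*\|$.
   Context: Each segment's mass equals its length and is spread uniformly over it (density one). A transport plan from $P$ to $S$ assigns to each $p\in P$ and each point $x$ on the segments a density $\tau_p(x)\in[0,1]$ such that each $p$ sends total mass $\|p\|$ (its weight) and each point $x$ receives total density $1$; its cost is $\|\tau\|=\sum_p\int\tau_p(x)\,\|p-x\|_2\,dx$, and $\|\tau^*\|$ is the minimum cost (earth mover's distance). Construction: (1) Subdivide $S$: repeatedly, for each current subsegment $s'$, if some point of $P$ has all of $s'$ within Euclidean distance $\delta/(nm)$, leave $s'$; otherwise, if some $p\in P$ has ratio of largest to smallest distance from $p$ to points of $s'$ exceeding $1+\delta$, cut $s'$ in half. Call the resulting subsegments $Q$. (2) Choose an arbitrary point on each $q\in Q$ with weight equal to the length of $q$; call this weighted point set $T$. (3) Compute an optimal transport plan $\nu$ between the weighted point sets $P$ and $T$ (Euclidean distances). (4) Obtain $\tau$ by spreading the mass that $\nu$ sends to each point $t\in T$ uniformly over the subsegment $q\in Q$ from which $t$ was chosen. *)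

theory Defs
  imports "HOL-Analysis.Analysis"
begin

(* Points of P: p i (i < n) with weight w i.  Segments of S: s_j = closed_segment (a j) (b j),
   j < m, parametrised by  seg a b j t = a j + t (b j - a j),  t in [0,1]; a point at parameter t
   carries length density dist (a j) (b j) dt. *)

definition seg :: "(nat \<Rightarrow> real^2) \<Rightarrow> (nat \<Rightarrow> real^2) \<Rightarrow> nat \<Rightarrow> real \<Rightarrow> real^2" where
  "seg a b j t = a j + t *\<^sub>R (b j - a j)"

text \<open>Continuous transport plan from P to S: tau i j t is the density sent by p i to the
  point of segment j with parameter t.\<close>
definition is_plan :: "nat \<Rightarrow> nat \<Rightarrow> (nat \<Rightarrow> real) \<Rightarrow> (nat \<Rightarrow> real^2) \<Rightarrow> (nat \<Rightarrow> real^2)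
    \<Rightarrow> (nat \<Rightarrow> nat \<Rightarrow> real \<Rightarrow> real) \<Rightarrow> bool" where
  "is_plan n m w a b tau \<longleftrightarrow>
     (\<forall>i<n. \<forall>j<m. \<forall>t\<in>{0..1}. 0 \<le> tau i j t \<and> tau i j t \<le> 1) \<and>
     (\<forall>i<n. \<forall>j<m. tau i j integrable_on {0..1}) \<and>
     (\<forall>i<n. (\<Sum>j<m. dist (a j) (b j) * integral {0..1} (tau i j)) = w i) \<and>
     (\<forall>j<m. \<forall>t\<in>{0..1}. (\<Sum>i<n. tau i j t) = 1)"

definition plan_cost :: "nat \<Rightarrow> nat \<Rightarrow> (nat \<Rightarrow> real^2) \<Rightarrow> (nat \<Rightarrow> real^2) \<Rightarrow> (nat \<Rightarrow> real^2)
    \<Rightarrow> (nat \<Rightarrow> nat \<Rightarrow> real \<Rightarrow> real) \<Rightarrow> real" where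
  "plan_cost n m p a b tau =
     (\<Sum>i<n. \<Sum>j<m. dist (a j) (b j) *
        integral {0..1} (\<lambda>t. tau i j t * dist (p i) (seg a b j t)))"

definition emd :: "nat \<Rightarrow> nat \<Rightarrow> (nat \<Rightarrow> real^2) \<Rightarrow> (nat \<Rightarrow> real) \<Rightarrow> (nat \<Rightarrow> real^2)
    \<Rightarrow> (nat \<Rightarrow> real^2) \<Rightarrow> real" where
  "emd n m p w a b = Inf {plan_cost n m p a b tau | tau. is_plan n m w a b tau}"

text \<open>Dyadic subsegments: (j,d,k) with k < 2^d is the piece of segment j with parameters
  in [k/2^d, (k+1)/2^d]; these are exactly the subsegments arising from repeated halving.\<close>
definition sub_lo :: "nat \<Rightarrow> nat \<Rightarrow> real" where
  "sub_lo d k = real k / 2 ^ d"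
definition sub_hi :: "nat \<Rightarrow> nat \<Rightarrow> real" where
  "sub_hi d k = real (Suc k) / 2 ^ d"

definition subseg :: "(nat \<Rightarrow> real^2) \<Rightarrow> (nat \<Rightarrow> real^2) \<Rightarrow> nat \<times> nat \<times> nat \<Rightarrow> (real^2) set" where
  "subseg a b q = (case q of (j, d, k) \<Rightarrow>
      closed_segment (seg a b j (sub_lo d k)) (seg a b j (sub_hi d k)))"

definition sub_len :: "(nat \<Rightarrow> real^2) \<Rightarrow> (nat \<Rightarrow> real^2) \<Rightarrow> nat \<times> nat \<times> nat \<Rightarrow> real" where
  "sub_len a b q = (case q of (j, d, k) \<Rightarrow>
      dist (seg a b j (sub_lo d k)) (seg a b j (sub_hi d k)))"

text \<open>A subsegment is left alone (not cut) iff some point of P has all of it within distance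
  delta/(nm), or no point of P has ratio largest/smallest distance exceeding 1+delta
  (ratio condition written multiplicatively: max > (1+delta) * min).\<close>
definition stops :: "nat \<Rightarrow> nat \<Rightarrow> (nat \<Rightarrow> real^2) \<Rightarrow> (nat \<Rightarrow> real^2) \<Rightarrow> (nat \<Rightarrow> real^2)
    \<Rightarrow> real \<Rightarrow> nat \<times> nat \<times> nat \<Rightarrow> bool" where
  "stops n m p a b \<delta> q \<longleftrightarrow>
     (\<exists>i<n. \<forall>x\<in>subseg a b q. dist (p i) x \<le> \<delta> / (real n * real m)) \<or>
     \<not> (\<exists>i<n. Sup ((\<lambda>x. dist (p i) x) ` subseg a b q)
                > (1 + \<delta>) * Inf ((\<lambda>x. dist (p i) x) ` subseg a b q))"

text \<open>The resulting subdivision Q: dyadic pieces that stop while all their dyadic ancestors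
  were cut.\<close>
definition Qset :: "nat \<Rightarrow> nat \<Rightarrow> (nat \<Rightarrow> real^2) \<Rightarrow> (nat \<Rightarrow> real^2) \<Rightarrow> (nat \<Rightarrow> real^2)
    \<Rightarrow> real \<Rightarrow> (nat \<times> nat \<times> nat) set" where
  "Qset n m p a b \<delta> = {(j, d, k). j < m \<and> k < 2 ^ d \<and> stops n m p a b \<delta> (j, d, k) \<and>
       (\<forall>d'<d. \<not> stops n m p a b \<delta> (j, d', k div 2 ^ (d - d')))}"

definition is_dplan :: "nat \<Rightarrow> (nat \<Rightarrow> real) \<Rightarrow> (nat \<times> nat \<times> nat) set
    \<Rightarrow> (nat \<times> nat \<times> nat \<Rightarrow> real) \<Rightarrow> (nat \<Rightarrow> nat \<times> nat \<times> nat \<Rightarrow> real) \<Rightarrow> bool" where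
  "is_dplan n w Q wt \<nu> \<longleftrightarrow>
     (\<forall>i<n. \<forall>q\<in>Q. 0 \<le> \<nu> i q) \<and>
     (\<forall>i<n. (\<Sum>q\<in>Q. \<nu> i q) = w i) \<and>
     (\<forall>q\<in>Q. (\<Sum>i<n. \<nu> i q) = wt q)"

definition dplan_cost :: "nat \<Rightarrow> (nat \<Rightarrow> real^2) \<Rightarrow> (nat \<times> nat \<times> nat) set
    \<Rightarrow> (nat \<times> nat \<times> nat \<Rightarrow> real^2) \<Rightarrow> (nat \<Rightarrow> nat \<times> nat \<times> nat \<Rightarrow> real) \<Rightarrow> real" where
  "dplan_cost n p Q t \<nu> = (\<Sum>i<n. \<Sum>q\<in>Q. \<nu> i q * dist (p i) (t q))"

text \<open>Step (4): spread the mass nu i q uniformly (w.r.t. length) over the subsegment q.\<close>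
definition spread :: "(nat \<Rightarrow> real^2) \<Rightarrow> (nat \<Rightarrow> real^2) \<Rightarrow> (nat \<times> nat \<times> nat) set
    \<Rightarrow> (nat \<Rightarrow> nat \<times> nat \<times> nat \<Rightarrow> real) \<Rightarrow> nat \<Rightarrow> nat \<Rightarrow> real \<Rightarrow> real" where
  "spread a b Q \<nu> i j t =
     (\<Sum>(d, k) \<in> {(d, k). (j, d, k) \<in> Q \<and> sub_lo d k \<le> t \<and> t < sub_hi d k}.
        \<nu> i (j, d, k) / sub_len a b (j, d, k))"

end

theory Submission
  imports Defs
begin

(*
  Every piece q of the subdivision either lies within distance \<delta>/(nm) of a point of P, or
  is seen by every point of P at distances within a factor 1 + \<delta>.  Hence for x, y on q
  and p in P we have d(p, x) \<le> (1 + \<delta>) d(p, y) + err q, where err q is the length of q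
  for pieces of the first kind and 0 otherwise.  Comparing the spread plan with the optimal
  discrete plan, and an arbitrary plan with its restriction to the pieces, gives
  cost \<le> (1 + \<delta>)\<^sup>2 C + (2 + \<delta>) E for the cost C of any plan, with E = \<Sum> err q |q|.

  On each segment the pieces of the first kind lie within \<delta>/(nm) of the n feet of the
  perpendiculars from P, so their total length is at most 2\<delta>/m and E \<le> 4\<delta>\<^sup>2/(nm).  On
  the other hand every plan costs at least 1/(6nm): the mass on a segment of length L cannot
  all sit close to the n feet, which gives cost at least L\<^sup>2/(6n) per segment, and
  \<Sum> L\<^sup>2 \<ge> 1/m.  For \<delta> \<le> 1/4 the additive error therefore fits into the factor 1 + 17\<delta>.
*)

section \<open>Segments and dyadic pieces\<close>

lemma dist_seg: "dist (seg a b j s) (seg a b j s') = \<bar>s - s'\<bar> * dist (a j) (b j)"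
proof -
  have "seg a b j s - seg a b j s' = (s - s') *\<^sub>R (b j - a j)"
    by (simp add: seg_def algebra_simps)
  then show ?thesis by (simp add: dist_norm dist_commute norm_minus_commute)
qed

lemma continuous_on_dist_seg: "continuous_on S (\<lambda>s. dist x (seg a b j s))"
  unfolding seg_def by (intro continuous_intros)

lemma integrable_dist_seg: "(\<lambda>s. dist x (seg a b j s)) integrable_on {u..v}"
  using continuous_on_dist_seg integrable_continuous_interval by blast

lemma sub_lo_nonneg: "0 \<le> sub_lo d k"
  by (simp add: sub_lo_def)

lemma sub_hi_minus_lo: "sub_hi d k - sub_lo d k = 1 / 2 ^ d"
  by (simp add: sub_lo_def sub_hi_def diff_divide_distrib[symmetric])

lemma sub_lo_le_hi: "sub_lo d k \<le> sub_hi d k"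
  by (simp add: sub_lo_def sub_hi_def divide_right_mono)

lemma sub_hi_le_1: "k < 2 ^ d \<Longrightarrow> sub_hi d k \<le> 1"
  by (simp add: sub_hi_def Suc_le_eq[symmetric] flip: of_nat_Suc)

lemma dyadic_ivl_subset:
  assumes "k < 2 ^ d" shows "{sub_lo d k..sub_hi d k} \<subseteq> {0..1}"
  using sub_lo_nonneg[of d k] sub_hi_le_1[OF assms] by auto

lemma closed_segment_seg:
  assumes "lo \<le> hi"
  shows "closed_segment (seg a b j lo) (seg a b j hi) = seg a b j ` {lo..hi}"
proof -
  have "closed_segment (lo *\<^sub>R (b j - a j)) (hi *\<^sub>R (b j - a j))
      = (\<lambda>s. s *\<^sub>R (b j - a j)) ` closed_segment lo hi"
    using closed_segment_linear_image[of "\<lambda>s. s *\<^sub>R (b j - a j)"]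
    by (simp add: linear_scaleR_left)
  then show ?thesis
    using assms closed_segment_translation[of "a j"]
    by (simp add: seg_def closed_segment_eq_real_ivl image_image)
qed

lemma subseg_eq: "subseg a b (j, d, k) = seg a b j ` {sub_lo d k..sub_hi d k}"
  by (simp add: subseg_def closed_segment_seg sub_lo_le_hi)

lemma sub_len_eq: "sub_len a b (j, d, k) = dist (a j) (b j) / 2 ^ d"
  using sub_hi_minus_lo[of d k] sub_lo_le_hi[of d k] by (simp add: sub_len_def dist_seg)

lemma sub_len_nonneg: "0 \<le> sub_len a b q"
  by (cases q) (simp add: sub_len_def)

lemma seg_mem_subseg: "s \<in> {sub_lo d k..sub_hi d k} \<Longrightarrow> seg a b j s \<in> subseg a b (j, d, k)"
  by (simp add: subseg_eq)

lemma dist_le_sub_len: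
  assumes "x \<in> subseg a b q" "y \<in> subseg a b q"
  shows "dist x y \<le> sub_len a b q"
proof -
  obtain j d k where q: "q = (j, d, k)" by (cases q) auto
  obtain s s' where s: "s \<in> {sub_lo d k..sub_hi d k}" "x = seg a b j s"
    and s': "s' \<in> {sub_lo d k..sub_hi d k}" "y = seg a b j s'"
    using assms by (auto simp: q subseg_eq)
  have "\<bar>s - s'\<bar> \<le> 1 / 2 ^ d" using s s' sub_hi_minus_lo[of d k] by auto
  then have "\<bar>s - s'\<bar> * dist (a j) (b j) \<le> 1 / 2 ^ d * dist (a j) (b j)"
    by (rule mult_right_mono) simp
  then show ?thesis using s s' by (simp add: q dist_seg sub_len_eq)
qed

lemma integral_dyadic_const: "integral {sub_lo d k..sub_hi d k} (\<lambda>s. c) = (c::real) / 2 ^ d"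
  using sub_lo_le_hi[of d k] sub_hi_minus_lo[of d k] by simp

lemma dyadic_mem_iff:
  "s \<in> {sub_lo d k..<sub_hi d k} \<longleftrightarrow> 0 \<le> s \<and> k = nat \<lfloor>s * 2 ^ d\<rfloor>"
proof -
  have "s \<in> {sub_lo d k..<sub_hi d k} \<longleftrightarrow> real k \<le> s * 2 ^ d \<and> s * 2 ^ d < real k + 1"
    by (simp add: sub_lo_def sub_hi_def divide_le_eq less_divide_eq add.commute)
  also have "\<dots> \<longleftrightarrow> 0 \<le> s * 2 ^ d \<and> k = nat \<lfloor>s * 2 ^ d\<rfloor>"
    by linarith
  also have "0 \<le> s * 2 ^ d \<longleftrightarrow> 0 \<le> s"
    using mult_le_cancel_right_pos[of "2 ^ d" 0 s] by simp
  finally show ?thesis .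
qed

lemma dyadic_index_ancestor:
  fixes s :: real
  assumes "0 \<le> s" "d' \<le> d"
  shows "nat \<lfloor>s * 2 ^ d'\<rfloor> = nat \<lfloor>s * 2 ^ d\<rfloor> div 2 ^ (d - d')"
proof -
  have "s * 2 ^ d' = s * 2 ^ d / 2 ^ (d - d')"
    using assms(2) by (simp add: power_diff)
  then have "\<lfloor>s * 2 ^ d'\<rfloor> = \<lfloor>s * 2 ^ d\<rfloor> div 2 ^ (d - d')"
    using floor_divide_real_eq_div[of "2 ^ (d - d')" "s * 2 ^ d"] by simp
  then show ?thesis using assms(1) by (simp add: nat_div_distrib nat_power_eq)
qed

lemma dyadic_index_less:
  fixes s :: real
  assumes "s < 1" shows "nat \<lfloor>s * 2 ^ d\<rfloor> < 2 ^ d"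
proof -
  have "\<lfloor>s * 2 ^ d\<rfloor> < 2 ^ d" using assms by (simp add: floor_less_iff)
  then show ?thesis by (simp add: nat_less_iff)
qed

lemma has_integral_sum_restricted:
  fixes g :: "real \<Rightarrow> real"
  assumes "finite A" "\<And>x. x \<in> A \<Longrightarrow> {lo x..hi x} \<subseteq> {0..1}" "g integrable_on {0..1}"
  shows "((\<lambda>s. \<Sum>x\<in>A. if s \<in> {lo x..<hi x} then c x * g s else 0)
            has_integral (\<Sum>x\<in>A. c x * integral {lo x..hi x} g)) {0..1}"
proof (rule has_integral_sum[OF assms(1)])
  fix x assume "x \<in> A"
  then have "((\<lambda>s. c x * g s) has_integral c x * integral {lo x..hi x} g) {lo x..hi x}"
    using assms(2,3)
    by (blast intro: has_integral_mult_right integrable_integral integrable_on_subinterval)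
  moreover have "((\<lambda>s. c x * g s) has_integral y) {lo x..<hi x}
      \<longleftrightarrow> ((\<lambda>s. c x * g s) has_integral y) {lo x..hi x}" for y
    by (rule has_integral_spike_set_eq; rule negligible_subset[of "{hi x}"]) auto
  ultimately have "((\<lambda>s. c x * g s) has_integral c x * integral {lo x..hi x} g) {lo x..<hi x}"
    by blast
  moreover have "{lo x..<hi x} \<inter> {0..1} = {lo x..<hi x}" using assms(2)[OF \<open>x \<in> A\<close>] by auto
  ultimately show "((\<lambda>s. if s \<in> {lo x..<hi x} then c x * g s else 0)
      has_integral c x * integral {lo x..hi x} g) {0..1}"
    by (simp only: has_integral_restrict_Int)
qed

section \<open>Termination of the subdivision\<close>

lemma exists_pow2_div_le: "0 < (e::real) \<Longrightarrow> \<exists>d::nat. L / 2 ^ d \<le> e"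
proof -
  assume "0 < e"
  obtain d :: nat where "L / e < 2 ^ d" using real_arch_pow[of 2 "L / e"] by auto
  then have "L < e * 2 ^ d" using \<open>0 < e\<close> by (simp add: divide_less_eq mult.commute)
  then show ?thesis using \<open>0 < e\<close> by (intro exI[of _ d]) (simp add: divide_le_eq mult.commute)
qed

lemma Sup_dist_le_Inf_dist:
  fixes X :: "'a::metric_space set"
  assumes "X \<noteq> {}" and near: "\<forall>x\<in>X. dist c x \<le> \<epsilon>"
    and "3 * \<epsilon> \<le> \<delta> * dist z c" "0 \<le> \<delta>" "\<delta> \<le> 1"
  shows "Sup (dist z ` X) \<le> (1 + \<delta>) * Inf (dist z ` X)"
proof -
  have "0 \<le> \<epsilon>" using assms(1) near by (meson ex_in_conv order_trans zero_le_dist)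
  have "Sup (dist z ` X) \<le> dist z c + \<epsilon>"
  proof (rule cSup_least)
    fix y assume "y \<in> dist z ` X"
    then obtain x where "x \<in> X" "y = dist z x" by blast
    then show "y \<le> dist z c + \<epsilon>" using near dist_triangle[of z x c] by fastforce
  qed (use assms(1) in simp)
  also have "\<dots> \<le> (1 + \<delta>) * (dist z c - \<epsilon>)"
    using assms(3-5) \<open>0 \<le> \<epsilon>\<close> mult_right_mono[of \<delta> 1 \<epsilon>] by (simp add: algebra_simps)
  also have "dist z c - \<epsilon> \<le> Inf (dist z ` X)"
  proof (rule cInf_greatest)
    fix y assume "y \<in> dist z ` X"
    then obtain x where "x \<in> X" "y = dist z x" by blast
    then show "dist z c - \<epsilon> \<le> y"
      using near dist_triangle[of z c x] dist_commute[of c x] by fastforce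
  qed (use assms(1) in simp)
  finally show ?thesis using assms(4) by (simp add: mult_left_mono)
qed

lemma stops_eventually:
  fixes s :: real
  assumes "0 < \<delta>" "\<delta> \<le> 1" "0 < n" "j < m" "0 \<le> s" "s < 1"
  shows "\<exists>d. stops n m p a b \<delta> (j, d, nat \<lfloor>s * 2 ^ d\<rfloor>)"
proof -
  define piece where "piece d = subseg a b (j, d, nat \<lfloor>s * 2 ^ d\<rfloor>)" for d
  have near: "dist (seg a b j s) x \<le> dist (a j) (b j) / 2 ^ d" if "x \<in> piece d" for d x
  proof -
    have "seg a b j s \<in> piece d"
      unfolding piece_def
      by (rule seg_mem_subseg) (use dyadic_mem_iff[of s d "nat \<lfloor>s * 2 ^ d\<rfloor>"] assms(5) in auto)
    then show ?thesis using dist_le_sub_len[of "seg a b j s" a b "(j, d, nat \<lfloor>s * 2 ^ d\<rfloor>)" x] that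
      by (simp add: piece_def sub_len_eq)
  qed
  show ?thesis
  proof (cases "\<exists>i<n. p i = seg a b j s")
    case True
    then obtain i where i: "i < n" "p i = seg a b j s" by auto
    have "0 < \<delta> / (real n * real m)" using assms by simp
    then obtain d where d: "dist (a j) (b j) / 2 ^ d \<le> \<delta> / (real n * real m)"
      using exists_pow2_div_le by blast
    have "\<forall>x\<in>piece d. dist (p i) x \<le> \<delta> / (real n * real m)"
      using near[of _ d] d i(2) by force
    then show ?thesis using i(1) unfolding stops_def piece_def by blast
  next
    case False
    define D where "D = Min ((\<lambda>i. dist (p i) (seg a b j s)) ` {..<n})"
    have "0 < D" unfolding D_def using False assms(3) by (subst Min_gr_iff) auto
    then have "0 < \<delta> * D / 3" using assms(1) by simp
    then obtain d where d: "dist (a j) (b j) / 2 ^ d \<le> \<delta> * D / 3"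
      using exists_pow2_div_le by blast
    have "Sup (dist (p i) ` piece d) \<le> (1 + \<delta>) * Inf (dist (p i) ` piece d)" if "i < n" for i
    proof (rule Sup_dist_le_Inf_dist)
      show "piece d \<noteq> {}" by (simp add: piece_def subseg_eq sub_lo_le_hi)
      have "D \<le> dist (p i) (seg a b j s)" unfolding D_def using that by simp
      then show "3 * (dist (a j) (b j) / 2 ^ d) \<le> \<delta> * dist (p i) (seg a b j s)"
        using d assms(1) mult_left_mono[of D "dist (p i) (seg a b j s)" \<delta>] by linarith
    qed (use near[of _ d] assms in simp_all)
    then have "stops n m p a b \<delta> (j, d, nat \<lfloor>s * 2 ^ d\<rfloor>)"
      unfolding stops_def piece_def by (auto simp: not_less)
    then show ?thesis ..
  qed
qed

lemma Qset_piece_unique: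
  assumes "(j, d, k) \<in> Qset n m p a b \<delta>" "(j, d', k') \<in> Qset n m p a b \<delta>"
    and "s \<in> {sub_lo d k..<sub_hi d k}" "s \<in> {sub_lo d' k'..<sub_hi d' k'}"
  shows "d = d' \<and> k = k'"
proof -
  have idx: "0 \<le> s" "k = nat \<lfloor>s * 2 ^ d\<rfloor>" "k' = nat \<lfloor>s * 2 ^ d'\<rfloor>"
    using assms(3,4) dyadic_mem_iff by auto
  have "\<not> d' < d" if "(j, d, k) \<in> Qset n m p a b \<delta>" "(j, d', k') \<in> Qset n m p a b \<delta>"
    "k = nat \<lfloor>s * 2 ^ d\<rfloor>" "k' = nat \<lfloor>s * 2 ^ d'\<rfloor>" for d k d' k'
  proof
    assume "d' < d" \<comment> \<open>then piece \<open>(j, d', k')\<close> is a stopping ancestor of \<open>(j, d, k)\<close>\<close>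
    then have "k div 2 ^ (d - d') = k'"
      using that(3,4) dyadic_index_ancestor[OF idx(1), of d' d] by simp
    then show False using that(1,2) \<open>d' < d\<close> unfolding Qset_def by auto
  qed
  then have "\<not> d' < d" "\<not> d < d'" using assms(1,2) idx by blast+
  then have "d = d'" by simp
  then show ?thesis using idx by simp
qed

lemma Qset_covers:
  fixes s :: real
  assumes "0 < \<delta>" "\<delta> \<le> 1" "0 < n" "j < m" "0 \<le> s" "s < 1"
  shows "\<exists>d k. (j, d, k) \<in> Qset n m p a b \<delta> \<and> s \<in> {sub_lo d k..<sub_hi d k}"
proof -
  define idx where "idx d = nat \<lfloor>s * 2 ^ d\<rfloor>" for d
  define d where "d = (LEAST d. stops n m p a b \<delta> (j, d, idx d))"
  have "stops n m p a b \<delta> (j, d, idx d)"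
    unfolding d_def idx_def by (rule LeastI_ex) (rule stops_eventually[OF assms])
  moreover have "\<not> stops n m p a b \<delta> (j, d', idx d div 2 ^ (d - d'))" if "d' < d" for d'
  proof -
    have "idx d div 2 ^ (d - d') = idx d'"
      using that dyadic_index_ancestor[OF assms(5), of d' d] by (simp add: idx_def)
    then show ?thesis using not_less_Least[OF that[unfolded d_def]] by simp
  qed
  ultimately have "(j, d, idx d) \<in> Qset n m p a b \<delta>"
    unfolding Qset_def using assms(4) dyadic_index_less[OF assms(6)] by (auto simp: idx_def)
  moreover have "s \<in> {sub_lo d (idx d)..<sub_hi d (idx d)}"
    using dyadic_mem_iff[of s d "idx d"] assms(5) by (simp add: idx_def)
  ultimately show ?thesis by blast
qed

section \<open>The pieces partition each segment\<close>

text \<open>A sum over an infinite set is 0 in Isabelle, so an index set that carries a discrete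
  plan with a nonzero weight is finite; this is how finiteness of Q is obtained.\<close>

lemma finite_if_dplan:
  assumes "is_dplan n w Q wt \<nu>" "i < n" "w i \<noteq> 0"
  shows "finite Q"
  using assms unfolding is_dplan_def by (metis sum.infinite)

locale subdivision =
  fixes n m :: nat and p :: "nat \<Rightarrow> real^2" and a b :: "nat \<Rightarrow> real^2" and \<delta> :: real
  assumes n_pos: "0 < n" and delta_pos: "0 < \<delta>" and delta_le_1: "\<delta> \<le> 1"
    and finite_Q: "finite (Qset n m p a b \<delta>)"
begin

abbreviation Q :: "(nat \<times> nat \<times> nat) set" where
  "Q \<equiv> Qset n m p a b \<delta>"

definition pieces :: "nat \<Rightarrow> (nat \<times> nat) set" where
  "pieces j = {(d, k). (j, d, k) \<in> Q}"

lemma finite_pieces: "finite (pieces j)"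
proof (rule finite_subset[OF _ finite_imageI[OF finite_Q, of snd]])
  show "pieces j \<subseteq> snd ` Q" unfolding pieces_def by force
qed

lemma Q_index: "(j, d, k) \<in> Q \<Longrightarrow> j < m \<and> k < 2 ^ d"
  unfolding Qset_def by simp

lemma pieces_subset: "(d, k) \<in> pieces j \<Longrightarrow> {sub_lo d k..sub_hi d k} \<subseteq> {0..1}"
  unfolding pieces_def using Q_index dyadic_ivl_subset by blast

lemma sum_Q: "(\<Sum>q\<in>Q. f q) = (\<Sum>j<m. \<Sum>(d, k)\<in>pieces j. f (j, d, k))"
proof -
  have "Q = (SIGMA j:{..<m}. pieces j)"
    unfolding pieces_def using Q_index by auto
  then show ?thesis
    using finite_pieces by (simp add: sum.Sigma case_prod_beta')
qed

lemma pieces_containing: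
  assumes "j < m" "0 \<le> s" "s < 1"
  obtains d k where "{(d', k') \<in> pieces j. s \<in> {sub_lo d' k'..<sub_hi d' k'}} = {(d, k)}"
proof -
  obtain d k where "(j, d, k) \<in> Q" "s \<in> {sub_lo d k..<sub_hi d k}"
    using Qset_covers[OF delta_pos delta_le_1 n_pos assms] by blast
  then have "{(d', k') \<in> pieces j. s \<in> {sub_lo d' k'..<sub_hi d' k'}} = {(d, k)}"
    using Qset_piece_unique unfolding pieces_def by blast
  then show thesis by (rule that)
qed

lemma finite_pieces_containing: "finite {(d, k) \<in> A. s \<in> {sub_lo d k..<sub_hi d k}}"
  if "A \<subseteq> pieces j"
  by (rule finite_subset[of _ "pieces j"]) (use that finite_pieces in auto)

lemma card_pieces_containing_le:
  "card {(d, k) \<in> pieces j. s \<in> {sub_lo d k..<sub_hi d k}} \<le> 1"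
proof -
  have "x = y" if "x \<in> {(d, k) \<in> pieces j. s \<in> {sub_lo d k..<sub_hi d k}}"
    "y \<in> {(d, k) \<in> pieces j. s \<in> {sub_lo d k..<sub_hi d k}}" for x y
    using that Qset_piece_unique[of j "fst x" "snd x" n m p a b \<delta> "fst y" "snd y" s]
    by (auto simp: pieces_def prod_eq_iff)
  then show ?thesis
    using finite_pieces_containing[OF order_refl] by (simp add: card_le_Suc0_iff_eq)
qed

lemma sum_pieces_containing:
  assumes "j < m" "0 \<le> s" "s < 1"
  shows "(\<Sum>(d, k)\<in>pieces j. if s \<in> {sub_lo d k..<sub_hi d k} then x else 0) = x"
proof -
  obtain d k where "{(d', k') \<in> pieces j. s \<in> {sub_lo d' k'..<sub_hi d' k'}} = {(d, k)}"
    using pieces_containing[OF assms] .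
  then show ?thesis
    using finite_pieces by (simp add: sum.inter_filter[symmetric] case_prod_beta')
qed

lemma sum_pieces_containing_le:
  assumes "A \<subseteq> pieces j"
  shows "(\<Sum>(d, k)\<in>A. if s \<in> {sub_lo d k..<sub_hi d k} then 1 else 0) \<le> (1::real)"
proof -
  have "finite A" using assms finite_pieces finite_subset by blast
  then have "(\<Sum>(d, k)\<in>A. if s \<in> {sub_lo d k..<sub_hi d k} then 1 else 0)
      = real (card {(d, k) \<in> A. s \<in> {sub_lo d k..<sub_hi d k}})"
    by (simp add: sum.inter_filter[symmetric] case_prod_beta')
  also have "card {(d, k) \<in> A. s \<in> {sub_lo d k..<sub_hi d k}}
      \<le> card {(d, k) \<in> pieces j. s \<in> {sub_lo d k..<sub_hi d k}}"
    using assms by (intro card_mono finite_pieces_containing[OF order_refl]) auto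
  finally show ?thesis using card_pieces_containing_le[of j s] by linarith
qed

lemma has_integral_sum_pieces:
  fixes g :: "real \<Rightarrow> real"
  assumes "A \<subseteq> pieces j" "g integrable_on {0..1}"
  shows "((\<lambda>s. \<Sum>(d, k)\<in>A. if s \<in> {sub_lo d k..<sub_hi d k} then c d k * g s else 0)
            has_integral (\<Sum>(d, k)\<in>A. c d k * integral {sub_lo d k..sub_hi d k} g)) {0..1}"
proof -
  have "finite A" using assms(1) finite_pieces finite_subset by blast
  moreover have "{sub_lo (fst x) (snd x)..sub_hi (fst x) (snd x)} \<subseteq> {0..1}" if "x \<in> A" for x
    using that assms(1) pieces_subset[of "fst x" "snd x" j] by auto
  ultimately show ?thesis
    using has_integral_sum_restricted[of A _ _ g "\<lambda>x. c (fst x) (snd x)", OF _ _ assms(2)]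
    by (simp add: case_prod_beta')
qed

lemma integral_eq_sum_pieces:
  fixes f :: "real \<Rightarrow> real"
  assumes "j < m" "f integrable_on {0..1}"
  shows "integral {0..1} f = (\<Sum>(d, k)\<in>pieces j. integral {sub_lo d k..sub_hi d k} f)"
proof -
  have "(f has_integral (\<Sum>(d, k)\<in>pieces j. 1 * integral {sub_lo d k..sub_hi d k} f)) {0..1}"
  proof (rule has_integral_spike[OF negligible_sing[of 1] _
        has_integral_sum_pieces[OF order_refl assms(2)]])
    fix s :: real assume "s \<in> {0..1} - {1}"
    then show "f s = (\<Sum>(d, k)\<in>pieces j. if s \<in> {sub_lo d k..<sub_hi d k} then 1 * f s else 0)"
      using sum_pieces_containing[OF assms(1), of s "1 * f s"] by simp
  qed
  then show ?thesis by (simp add: integral_unique)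
qed

lemma integrable_on_piece:
  fixes f :: "real \<Rightarrow> 'a::banach"
  assumes "f integrable_on {0..1}" "(j, d, k) \<in> Q"
  shows "f integrable_on {sub_lo d k..sub_hi d k}"
  using assms(1) dyadic_ivl_subset[OF Q_index[OF assms(2), THEN conjunct2]]
  by (rule integrable_on_subinterval)

end

section \<open>Distortion on a piece and the cost of spreading\<close>

context subdivision
begin

definition near :: "nat \<times> nat \<times> nat \<Rightarrow> bool" where
  "near q \<longleftrightarrow> (\<exists>i<n. \<forall>x\<in>subseg a b q. dist (p i) x \<le> \<delta> / (real n * real m))"

text \<open>Pieces that stopped by the proximity test carry no ratio guarantee; their distortion is
  absorbed additively by their length.\<close>

definition err :: "nat \<times> nat \<times> nat \<Rightarrow> real" where
  "err q = (if near q then sub_len a b q else 0)"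

lemma err_nonneg: "0 \<le> err q"
  by (cases q) (simp add: err_def sub_len_def)

lemma dist_le_on_piece:
  assumes "q \<in> Q" "i < n" "x \<in> subseg a b q" "y \<in> subseg a b q"
  shows "dist (p i) x \<le> (1 + \<delta>) * dist (p i) y + err q"
proof (cases "near q")
  case True
  have "dist (p i) x \<le> dist (p i) y + dist y x" by (rule dist_triangle)
  also have "\<dots> \<le> (1 + \<delta>) * dist (p i) y + err q"
    using True dist_le_sub_len[OF assms(4,3)] delta_pos
    by (simp add: err_def algebra_simps add_increasing2)
  finally show ?thesis .
next
  case False
  define D where "D = dist (p i) ` subseg a b q"
  have "\<not> Sup D > (1 + \<delta>) * Inf D"
    using assms(1,2) False unfolding Qset_def stops_def near_def D_def by blast
  moreover have "dist (p i) x \<le> Sup D"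
  proof (rule cSup_upper)
    have "dist (p i) z \<le> dist (p i) y + sub_len a b q" if "z \<in> subseg a b q" for z
      using dist_le_sub_len[OF assms(4) that] dist_triangle[of "p i" z y] by simp
    then show "bdd_above D" unfolding D_def by (rule bdd_aboveI2)
  qed (use assms(3) D_def in simp)
  moreover have "Inf D \<le> dist (p i) y"
    by (rule cInf_lower) (use assms(4) D_def in \<open>auto intro: bdd_belowI2[where m = 0]\<close>)
  moreover have "(1 + \<delta>) * Inf D \<le> (1 + \<delta>) * dist (p i) y"
    using calculation(3) delta_pos by (simp add: mult_left_mono)
  ultimately show ?thesis by (simp add: err_def False)
qed

lemma spread_eq_sum_pieces:
  "spread a b Q \<nu> i j s = (\<Sum>(d, k)\<in>pieces j.
     if s \<in> {sub_lo d k..<sub_hi d k} then \<nu> i (j, d, k) / sub_len a b (j, d, k) else 0)"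
proof -
  have "{(d, k). (j, d, k) \<in> Q \<and> sub_lo d k \<le> s \<and> s < sub_hi d k}
      = {(d, k) \<in> pieces j. s \<in> {sub_lo d k..<sub_hi d k}}"
    unfolding pieces_def by auto
  then show ?thesis
    unfolding spread_def using finite_pieces
    by (simp add: sum.inter_filter[symmetric] case_prod_beta' cong: if_cong)
qed

lemma integral_spread_dist:
  "integral {0..1} (\<lambda>s. spread a b Q \<nu> i j s * dist (p i) (seg a b j s)) =
   (\<Sum>(d, k)\<in>pieces j. \<nu> i (j, d, k) / sub_len a b (j, d, k) *
      integral {sub_lo d k..sub_hi d k} (\<lambda>s. dist (p i) (seg a b j s)))"
proof -
  have "(\<lambda>s. spread a b Q \<nu> i j s * dist (p i) (seg a b j s)) =
     (\<lambda>s. \<Sum>(d, k)\<in>pieces j. if s \<in> {sub_lo d k..<sub_hi d k}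
        then \<nu> i (j, d, k) / sub_len a b (j, d, k) * dist (p i) (seg a b j s) else 0)"
    unfolding spread_eq_sum_pieces
    by (auto simp: sum_distrib_right case_prod_beta' intro!: sum.cong)
  moreover have "((\<lambda>s. \<Sum>(d, k)\<in>pieces j. if s \<in> {sub_lo d k..<sub_hi d k}
        then \<nu> i (j, d, k) / sub_len a b (j, d, k) * dist (p i) (seg a b j s) else 0)
      has_integral (\<Sum>(d, k)\<in>pieces j. \<nu> i (j, d, k) / sub_len a b (j, d, k) *
        integral {sub_lo d k..sub_hi d k} (\<lambda>s. dist (p i) (seg a b j s)))) {0..1}"
    by (rule has_integral_sum_pieces[OF order_refl integrable_dist_seg])
  ultimately show ?thesis by (simp add: integral_unique)
qed

lemma integral_dist_on_piece_le:
  assumes "(j, d, k) \<in> Q" "i < n" "y \<in> subseg a b (j, d, k)"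
  shows "dist (a j) (b j) * integral {sub_lo d k..sub_hi d k} (\<lambda>s. dist (p i) (seg a b j s))
      \<le> sub_len a b (j, d, k) * ((1 + \<delta>) * dist (p i) y + err (j, d, k))"
proof -
  define K where "K = (1 + \<delta>) * dist (p i) y + err (j, d, k)"
  have "integral {sub_lo d k..sub_hi d k} (\<lambda>s. dist (p i) (seg a b j s))
      \<le> integral {sub_lo d k..sub_hi d k} (\<lambda>s. K)"
    using dist_le_on_piece[OF assms(1,2) seg_mem_subseg assms(3)]
    by (intro integral_le integrable_dist_seg) (auto simp: K_def)
  also have "\<dots> = K / 2 ^ d" by (rule integral_dyadic_const)
  finally have "dist (a j) (b j) * integral {sub_lo d k..sub_hi d k} (\<lambda>s. dist (p i) (seg a b j s))
      \<le> dist (a j) (b j) * (K / 2 ^ d)"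
    by (rule mult_left_mono) simp
  then show ?thesis by (simp add: sub_len_eq K_def)
qed

lemma plan_cost_spread_le:
  assumes t_on: "\<forall>q\<in>Q. t q \<in> subseg a b q" and \<nu>: "is_dplan n w Q (sub_len a b) \<nu>"
  shows "plan_cost n m p a b (spread a b Q \<nu>)
      \<le> (1 + \<delta>) * dplan_cost n p Q t \<nu> + (\<Sum>q\<in>Q. err q * sub_len a b q)"
proof -
  have term_le: "dist (a j) (b j) * (\<nu> i (j, d, k) / sub_len a b (j, d, k) *
        integral {sub_lo d k..sub_hi d k} (\<lambda>s. dist (p i) (seg a b j s)))
      \<le> \<nu> i (j, d, k) * ((1 + \<delta>) * dist (p i) (t (j, d, k)) + err (j, d, k))"
    if q: "(j, d, k) \<in> Q" and i: "i < n" for i j d k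
  proof (cases "sub_len a b (j, d, k) = 0")
    case True \<comment> \<open>the spread density is then \<open>\<nu> i q / 0 = 0\<close>\<close>
    then show ?thesis using \<nu> q i err_nonneg delta_pos unfolding is_dplan_def by simp
  next
    case False
    have "0 \<le> \<nu> i (j, d, k) / sub_len a b (j, d, k)"
      using \<nu> q i unfolding is_dplan_def by (simp add: sub_len_def)
    from mult_left_mono[OF integral_dist_on_piece_le[OF q i t_on[rule_format, OF q]] this]
    have "\<nu> i (j, d, k) / sub_len a b (j, d, k) *
        (dist (a j) (b j) * integral {sub_lo d k..sub_hi d k} (\<lambda>s. dist (p i) (seg a b j s)))
      \<le> \<nu> i (j, d, k) * ((1 + \<delta>) * dist (p i) (t (j, d, k)) + err (j, d, k))"
      using False by simp
    then show ?thesis by (simp add: algebra_simps)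
  qed
  have "plan_cost n m p a b (spread a b Q \<nu>) = (\<Sum>i<n. \<Sum>j<m. \<Sum>(d, k)\<in>pieces j.
      dist (a j) (b j) * (\<nu> i (j, d, k) / sub_len a b (j, d, k) *
        integral {sub_lo d k..sub_hi d k} (\<lambda>s. dist (p i) (seg a b j s))))"
    unfolding plan_cost_def integral_spread_dist by (simp add: sum_distrib_left case_prod_beta')
  also have "\<dots> \<le> (\<Sum>i<n. \<Sum>j<m. \<Sum>(d, k)\<in>pieces j.
      \<nu> i (j, d, k) * ((1 + \<delta>) * dist (p i) (t (j, d, k)) + err (j, d, k)))"
    using term_le unfolding pieces_def by (intro sum_mono) auto
  also have "\<dots> = (\<Sum>i<n. \<Sum>q\<in>Q. \<nu> i q * ((1 + \<delta>) * dist (p i) (t q) + err q))"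
    by (simp add: sum_Q)
  also have "\<dots> = (1 + \<delta>) * dplan_cost n p Q t \<nu> + (\<Sum>q\<in>Q. err q * (\<Sum>i<n. \<nu> i q))"
    unfolding dplan_cost_def
    by (simp add: algebra_simps sum.distrib sum_distrib_left sum_distrib_right sum.swap[of _ Q])
  also have "\<dots> = (1 + \<delta>) * dplan_cost n p Q t \<nu> + (\<Sum>q\<in>Q. err q * sub_len a b q)"
    using \<nu> unfolding is_dplan_def by simp
  finally show ?thesis .
qed

end

section \<open>The additive error\<close>

definition foot_param :: "'a::real_inner \<Rightarrow> 'a \<Rightarrow> 'a \<Rightarrow> real" where
  "foot_param z a u = inner (z - a) u / inner u u"

lemma dist_line_ge:
  fixes z a u :: "'a::real_inner"
  shows "\<bar>s - foot_param z a u\<bar> * norm u \<le> dist z (a + s *\<^sub>R u)"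
proof (cases "u = 0")
  case False
  define v where "v = z - a"
  define c where "c = inner v u / inner u u"
  have uu: "0 < inner u u" using False by simp
  have "(\<bar>s - c\<bar> * norm u)\<^sup>2 = (s - c)\<^sup>2 * inner u u"
    by (simp add: power_mult_distrib power2_norm_eq_inner)
  also have "\<dots> = s\<^sup>2 * inner u u - 2 * s * inner v u + (inner v u)\<^sup>2 / inner u u"
    using uu by (simp add: c_def power2_eq_square field_simps)
  also have "\<dots> \<le> s\<^sup>2 * inner u u - 2 * s * inner v u + inner v v"
    using Cauchy_Schwarz_ineq[of v u] uu by (simp add: divide_le_eq)
  also have "\<dots> = inner (v - s *\<^sub>R u) (v - s *\<^sub>R u)"
    by (simp add: inner_diff_left inner_diff_right power2_eq_square algebra_simps inner_commute)
  also have "\<dots> = (norm (v - s *\<^sub>R u))\<^sup>2"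
    by (rule power2_norm_eq_inner[symmetric])
  finally have "\<bar>s - c\<bar> * norm u \<le> norm (v - s *\<^sub>R u)"
    by (rule power2_le_imp_le) simp
  then show ?thesis by (simp add: c_def v_def foot_param_def dist_norm algebra_simps)
qed simp

lemma dist_seg_ge_foot:
  "\<bar>s - foot_param z (a j) (b j - a j)\<bar> * dist (a j) (b j) \<le> dist z (seg a b j s)"
  using dist_line_ge[of s z "a j" "b j - a j"] by (simp add: seg_def dist_norm norm_minus_commute)

definition count_within :: "nat \<Rightarrow> (nat \<Rightarrow> real) \<Rightarrow> real \<Rightarrow> real \<Rightarrow> real" where
  "count_within n c \<rho> s = (\<Sum>i<n. if \<bar>s - c i\<bar> \<le> \<rho> then 1 else 0)"

lemma count_within_nonneg: "0 \<le> count_within n c \<rho> s"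
  unfolding count_within_def by (rule sum_nonneg) simp

lemma indicator_le_count_within:
  "i < n \<Longrightarrow> (if \<bar>s - c i\<bar> \<le> \<rho> then 1 else 0) \<le> count_within n c \<rho> s"
  unfolding count_within_def
  by (rule member_le_sum[of i "{..<n}" "\<lambda>i. if \<bar>s - c i\<bar> \<le> \<rho> then 1 else (0::real)"]) simp_all

lemma indicator_within_integral:
  fixes x \<rho> :: real
  assumes "0 \<le> \<rho>"
  shows "(\<lambda>s. if \<bar>s - x\<bar> \<le> \<rho> then 1 else 0::real) integrable_on {0..1}"
    and "integral {0..1} (\<lambda>s. if \<bar>s - x\<bar> \<le> \<rho> then 1 else 0::real) \<le> 2 * \<rho>"
proof -
  have eq: "(\<lambda>s. if \<bar>s - x\<bar> \<le> \<rho> then 1 else 0::real) = (\<lambda>s. if s \<in> {x - \<rho>..x + \<rho>} then 1 else 0)"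
    by (auto simp: abs_le_iff)
  have ivl: "{x - \<rho>..x + \<rho>} \<inter> {0..1} = {max (x - \<rho>) 0..min (x + \<rho>) 1}" by auto
  show "(\<lambda>s. if \<bar>s - x\<bar> \<le> \<rho> then 1 else 0::real) integrable_on {0..1}"
    unfolding eq integrable_restrict_Int ivl by (rule integrable_const_ivl)
  show "integral {0..1} (\<lambda>s. if \<bar>s - x\<bar> \<le> \<rho> then 1 else 0::real) \<le> 2 * \<rho>"
    unfolding eq integral_restrict_Int ivl using assms by auto
qed

lemma count_within_eq: "count_within n c \<rho> = (\<lambda>s. \<Sum>i<n. if \<bar>s - c i\<bar> \<le> \<rho> then 1 else 0)"
  by (simp add: fun_eq_iff count_within_def)

lemma integrable_count_within:
  assumes "0 \<le> \<rho>" shows "count_within n c \<rho> integrable_on {0..1}"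
  unfolding count_within_eq by (intro integrable_sum indicator_within_integral(1)[OF assms]) simp

lemma integral_count_within_le:
  assumes "0 \<le> \<rho>"
  shows "integral {0..1} (count_within n c \<rho>) \<le> real n * (2 * \<rho>)"
proof -
  have "integral {0..1} (count_within n c \<rho>)
      = (\<Sum>i<n. integral {0..1} (\<lambda>s. if \<bar>s - c i\<bar> \<le> \<rho> then 1 else 0::real))"
    unfolding count_within_eq
    by (rule integral_sum) (simp_all add: indicator_within_integral(1)[OF assms])
  also have "\<dots> \<le> (\<Sum>i<n. 2 * \<rho>)"
    by (rule sum_mono) (rule indicator_within_integral[OF assms])
  finally show ?thesis by simp
qed

context subdivision
begin

abbreviation radius :: real where
  "radius \<equiv> \<delta> / (real n * real m)"

lemma near_sub_len_le: "near q \<Longrightarrow> sub_len a b q \<le> 2 * radius"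
proof -
  assume "near q"
  then obtain i where i: "\<forall>x\<in>subseg a b q. dist (p i) x \<le> radius" unfolding near_def by blast
  obtain j d k where q: "q = (j, d, k)" by (cases q) auto
  have ends: "seg a b j (sub_lo d k) \<in> subseg a b q" "seg a b j (sub_hi d k) \<in> subseg a b q"
    using seg_mem_subseg sub_lo_le_hi by (auto simp: q)
  have "sub_len a b q = dist (seg a b j (sub_lo d k)) (seg a b j (sub_hi d k))"
    by (simp add: q sub_len_def)
  also have "\<dots> \<le> dist (seg a b j (sub_lo d k)) (p i) + dist (p i) (seg a b j (sub_hi d k))"
    by (rule dist_triangle)
  also have "\<dots> \<le> 2 * radius"
  proof -
    have "dist (p i) (seg a b j (sub_lo d k)) \<le> radius"
      and "dist (p i) (seg a b j (sub_hi d k)) \<le> radius"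
      using i ends by blast+
    then have "dist (seg a b j (sub_lo d k)) (p i) + dist (p i) (seg a b j (sub_hi d k))
        \<le> radius + radius"
      by (intro add_mono) (simp_all add: dist_commute)
    then show ?thesis by (simp only: mult_2)
  qed
  finally show ?thesis .
qed

lemma near_piece_close_to_foot:
  assumes "near (j, d, k)" "s \<in> {sub_lo d k..sub_hi d k}" "0 < dist (a j) (b j)"
  shows "\<exists>i<n. \<bar>s - foot_param (p i) (a j) (b j - a j)\<bar> \<le> radius / dist (a j) (b j)"
proof -
  obtain i where "i < n" "\<forall>x\<in>subseg a b (j, d, k). dist (p i) x \<le> radius"
    using assms(1) unfolding near_def by blast
  then have "dist (p i) (seg a b j s) \<le> radius" using assms(2) seg_mem_subseg by blast
  then have "\<bar>s - foot_param (p i) (a j) (b j - a j)\<bar> * dist (a j) (b j) \<le> radius"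
    using dist_seg_ge_foot[of s "p i" a j b] by linarith
  then have "\<bar>s - foot_param (p i) (a j) (b j - a j)\<bar> \<le> radius / dist (a j) (b j)"
    by (simp only: pos_le_divide_eq[OF assms(3)])
  with \<open>i < n\<close> show ?thesis by blast
qed

lemma near_pieces_length_le:
  assumes "j < m" "0 < dist (a j) (b j)"
  shows "(\<Sum>(d, k)\<in>{(d, k) \<in> pieces j. near (j, d, k)}. 1 / 2 ^ d)
      \<le> real n * (2 * (radius / dist (a j) (b j)))"
proof -
  define A where "A = {(d, k) \<in> pieces j. near (j, d, k)}"
  define F where "F = (\<lambda>s::real. \<Sum>(d, k)\<in>A. if s \<in> {sub_lo d k..<sub_hi d k} then 1 else 0::real)"
  define \<rho> where "\<rho> = radius / dist (a j) (b j)"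
  define c where "c i = foot_param (p i) (a j) (b j - a j)" for i
  have "0 \<le> \<rho>" unfolding \<rho>_def using delta_pos by simp
  have "A \<subseteq> pieces j" by (auto simp: A_def)
  from has_integral_sum_pieces[OF this integrable_const_ivl[of "1::real" 0 1], where c = "\<lambda>_ _. 1"]
  have F: "(F has_integral (\<Sum>(d, k)\<in>A. integral {sub_lo d k..sub_hi d k} (\<lambda>s. 1))) {0..1}"
    by (simp only: F_def mult_1_left)
  have "F s \<le> count_within n c \<rho> s" for s
  proof (cases "\<exists>(d, k)\<in>A. s \<in> {sub_lo d k..<sub_hi d k}")
    case True
    then obtain d k where "(d, k) \<in> A" "s \<in> {sub_lo d k..<sub_hi d k}" by blast
    then obtain i where "i < n" "\<bar>s - c i\<bar> \<le> \<rho>"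
      using near_piece_close_to_foot[of j d k s] assms(2) unfolding A_def c_def \<rho>_def by auto
    then have "1 \<le> count_within n c \<rho> s"
      using indicator_le_count_within[of i n s c \<rho>] by simp
    moreover have "F s \<le> 1"
      unfolding F_def using sum_pieces_containing_le[OF \<open>A \<subseteq> pieces j\<close>, of s] by simp
    ultimately show ?thesis by linarith
  next
    case False
    then have "F s = 0" unfolding F_def by (auto intro!: sum.neutral)
    then show ?thesis using count_within_nonneg by simp
  qed
  then have "integral {0..1} F \<le> integral {0..1} (count_within n c \<rho>)"
    using F integrable_count_within[OF \<open>0 \<le> \<rho>\<close>] by (intro integral_le) auto
  also have "\<dots> \<le> real n * (2 * \<rho>)" by (rule integral_count_within_le[OF \<open>0 \<le> \<rho>\<close>])
  finally have "integral {0..1} F \<le> real n * (2 * \<rho>)" .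
  moreover have "integral {0..1} F = (\<Sum>(d, k)\<in>A. 1 / 2 ^ d)"
    using integral_unique[OF F] by (simp add: sub_lo_le_hi sub_hi_minus_lo)
  ultimately show ?thesis unfolding A_def[symmetric] \<rho>_def[symmetric] by simp
qed

lemma sum_err_segment_le:
  assumes "j < m"
  shows "(\<Sum>(d, k)\<in>pieces j. err (j, d, k) * sub_len a b (j, d, k)) \<le> 4 * real n * radius\<^sup>2"
proof (cases "dist (a j) (b j) = 0")
  case True
  then show ?thesis by (simp add: sub_len_eq)
next
  case False
  define L where "L = dist (a j) (b j)"
  have "0 < L" using False by (simp add: L_def)
  have "(\<Sum>(d, k)\<in>pieces j. err (j, d, k) * sub_len a b (j, d, k))
      = (\<Sum>(d, k)\<in>pieces j.
          if near (j, d, k) then sub_len a b (j, d, k) * sub_len a b (j, d, k) else 0)"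
    by (intro sum.cong) (auto simp: err_def)
  also have "\<dots> = (\<Sum>(d, k)\<in>{(d, k) \<in> pieces j. near (j, d, k)}.
      sub_len a b (j, d, k) * sub_len a b (j, d, k))"
    using finite_pieces by (simp add: sum.inter_filter[symmetric] case_prod_beta')
  also have "\<dots> \<le> (\<Sum>(d, k)\<in>{(d, k) \<in> pieces j. near (j, d, k)}. 2 * radius * sub_len a b (j, d, k))"
  proof (rule sum_mono, clarify)
    fix d k assume "(d, k) \<in> pieces j" "near (j, d, k)"
    then show "sub_len a b (j, d, k) * sub_len a b (j, d, k) \<le> 2 * radius * sub_len a b (j, d, k)"
      by (intro mult_right_mono near_sub_len_le sub_len_nonneg)
  qed
  also have "\<dots> = (\<Sum>(d, k)\<in>{(d, k) \<in> pieces j. near (j, d, k)}. 2 * radius * (L * (1 / 2 ^ d)))"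
    by (simp add: L_def sub_len_eq)
  also have "\<dots> = 2 * radius * L * (\<Sum>(d, k)\<in>{(d, k) \<in> pieces j. near (j, d, k)}. 1 / 2 ^ d)"
    by (simp add: sum_distrib_left case_prod_beta' mult.assoc)
  also have "\<dots> \<le> 2 * radius * L * (real n * (2 * (radius / L)))"
    using near_pieces_length_le[OF assms] \<open>0 < L\<close> delta_pos
    by (intro mult_left_mono) (auto simp: L_def)
  also have "\<dots> = 4 * real n * radius\<^sup>2"
    using \<open>0 < L\<close> by (simp add: power2_eq_square)
  finally show ?thesis .
qed

lemma sum_err_le: "(\<Sum>q\<in>Q. err q * sub_len a b q) \<le> 4 * \<delta>\<^sup>2 / (real n * real m)"
proof -
  have "(\<Sum>q\<in>Q. err q * sub_len a b q) \<le> (\<Sum>j<m. 4 * real n * radius\<^sup>2)"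
    unfolding sum_Q by (intro sum_mono sum_err_segment_le) simp
  also have "\<dots> = 4 * \<delta>\<^sup>2 / (real n * real m)"
    using n_pos by (cases "m = 0") (simp_all add: power2_eq_square)
  finally show ?thesis .
qed

end

section \<open>A lower bound on the cost of any plan\<close>

lemma sum_squares_ge:
  fixes x :: "nat \<Rightarrow> real"
  assumes "(\<Sum>j<m. x j) = 1"
  shows "1 / real m \<le> (\<Sum>j<m. (x j)\<^sup>2)"
proof -
  have "0 < m" using assms by (cases m) auto
  then show ?thesis
    using sum_squared_le_sum_of_squares[of x "{..<m}"] assms
    by (simp add: divide_le_eq mult.commute)
qed

text \<open>A step function standing in for the distance from \<open>s\<close> to the nearest \<open>c i\<close>, whose
  integral is awkward to bound directly.\<close>

definition nearest_lower :: "nat \<Rightarrow> (nat \<Rightarrow> real) \<Rightarrow> real \<Rightarrow> real \<Rightarrow> real" where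
  "nearest_lower n c \<rho> s = \<rho> * (2 - count_within n c \<rho> s - count_within n c (2 * \<rho>) s)"

lemma nearest_lower_le:
  assumes "i < n" "0 \<le> \<rho>"
  shows "nearest_lower n c \<rho> s \<le> \<bar>s - c i\<bar>"
proof -
  let ?x = "\<bar>s - c i\<bar>"
  have "2 - count_within n c \<rho> s - count_within n c (2 * \<rho>) s
      \<le> 2 - (if ?x \<le> \<rho> then 1 else 0) - (if ?x \<le> 2 * \<rho> then 1 else 0)"
    using indicator_le_count_within[OF assms(1), of s c \<rho>]
      indicator_le_count_within[OF assms(1), of s c "2 * \<rho>"] by linarith
  then have "nearest_lower n c \<rho> s
      \<le> \<rho> * (2 - (if ?x \<le> \<rho> then 1 else 0) - (if ?x \<le> 2 * \<rho> then 1 else 0))"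
    unfolding nearest_lower_def using assms(2) by (rule mult_left_mono)
  also have "\<dots> \<le> ?x" using assms(2) by auto
  finally show ?thesis .
qed

lemma has_integral_nearest_lower:
  assumes "0 \<le> \<rho>"
  shows "(nearest_lower n c \<rho> has_integral \<rho> * (2 - integral {0..1} (count_within n c \<rho>)
      - integral {0..1} (count_within n c (2 * \<rho>)))) {0..1}"
proof -
  have "((\<lambda>s. 2 - count_within n c \<rho> s - count_within n c (2 * \<rho>) s) has_integral
      2 - integral {0..1} (count_within n c \<rho>) - integral {0..1} (count_within n c (2 * \<rho>))) {0..1}"
    using assms by (intro has_integral_diff integrable_integral integrable_count_within)
      (auto intro: has_integral_const_real[of 2 0 1, simplified])
  then show ?thesis
    unfolding nearest_lower_def[abs_def] by (rule has_integral_mult_right)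
qed

lemma integral_nearest_lower_ge:
  assumes "0 < n"
  shows "1 / (6 * real n) \<le> integral {0..1} (nearest_lower n c (1 / (6 * real n)))"
proof -
  define \<rho> where "\<rho> = 1 / (6 * real n)"
  have "0 \<le> \<rho>" by (simp add: \<rho>_def)
  have "1 \<le> 2 - integral {0..1} (count_within n c \<rho>) - integral {0..1} (count_within n c (2 * \<rho>))"
    using integral_count_within_le[of \<rho> n c] integral_count_within_le[of "2 * \<rho>" n c] \<open>0 \<le> \<rho>\<close>
      assms by (simp add: \<rho>_def)
  from mult_left_mono[OF this \<open>0 \<le> \<rho>\<close>] show ?thesis
    using integral_unique[OF has_integral_nearest_lower[OF \<open>0 \<le> \<rho>\<close>]] by (simp add: \<rho>_def)
qed

locale transport_plan =
  fixes n m :: nat and w :: "nat \<Rightarrow> real" and p a b :: "nat \<Rightarrow> real^2"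
    and \<tau> :: "nat \<Rightarrow> nat \<Rightarrow> real \<Rightarrow> real"
  assumes plan: "is_plan n m w a b \<tau>"
begin

lemma density_nonneg: "i < n \<Longrightarrow> j < m \<Longrightarrow> s \<in> {0..1} \<Longrightarrow> 0 \<le> \<tau> i j s"
  using plan unfolding is_plan_def by blast

lemma integrable_density: "i < n \<Longrightarrow> j < m \<Longrightarrow> \<tau> i j integrable_on {0..1}"
  using plan unfolding is_plan_def by blast

lemma mass_density: "i < n \<Longrightarrow> (\<Sum>j<m. dist (a j) (b j) * integral {0..1} (\<tau> i j)) = w i"
  using plan unfolding is_plan_def by blast

lemma sum_density: "j < m \<Longrightarrow> s \<in> {0..1} \<Longrightarrow> (\<Sum>i<n. \<tau> i j s) = 1"
  using plan unfolding is_plan_def by blast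

lemma integrable_density_dist:
  assumes "i < n" "j < m"
  shows "(\<lambda>s. \<tau> i j s * dist (p i) (seg a b j s)) integrable_on {0..1}"
proof -
  have "\<tau> i j absolutely_integrable_on {0..1}"
    using integrable_density[OF assms] density_nonneg[OF assms]
    by (intro nonnegative_absolutely_integrable_1) auto
  moreover have "(\<lambda>s. dist (p i) (seg a b j s)) \<in> borel_measurable (lebesgue_on {0..1})"
    using continuous_imp_measurable_on_sets_lebesgue[OF continuous_on_dist_seg] by simp
  moreover have "bounded ((\<lambda>s. dist (p i) (seg a b j s)) ` {0..1})"
    by (intro compact_imp_bounded compact_continuous_image continuous_on_dist_seg) simp
  ultimately have "(\<lambda>s. dist (p i) (seg a b j s) * \<tau> i j s) absolutely_integrable_on {0..1}"
    by (intro absolutely_integrable_bounded_measurable_product_real) simp_all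
  then show ?thesis
    using set_lebesgue_integral_eq_integral(1) by (simp add: mult.commute)
qed

lemma segment_cost_ge:
  assumes "j < m" "0 < n"
  shows "dist (a j) (b j) / (6 * real n)
      \<le> integral {0..1} (\<lambda>s. \<Sum>i<n. \<tau> i j s * dist (p i) (seg a b j s))"
proof -
  define L where "L = dist (a j) (b j)"
  define \<rho> where "\<rho> = 1 / (6 * real n)"
  define c where "c i = foot_param (p i) (a j) (b j - a j)" for i
  have "0 \<le> \<rho>" by (simp add: \<rho>_def)
  have lower: "L * nearest_lower n c \<rho> s \<le> (\<Sum>i<n. \<tau> i j s * dist (p i) (seg a b j s))"
    if "s \<in> {0..1}" for s
  proof -
    have "L * nearest_lower n c \<rho> s \<le> dist (p i) (seg a b j s)" if "i < n" for i
      using mult_left_mono[OF nearest_lower_le[OF that \<open>0 \<le> \<rho>\<close>, where c = c and s = s], of L]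
        dist_seg_ge_foot[of s "p i" a j b] by (simp add: L_def c_def mult.commute)
    then have "(\<Sum>i<n. \<tau> i j s * (L * nearest_lower n c \<rho> s))
        \<le> (\<Sum>i<n. \<tau> i j s * dist (p i) (seg a b j s))"
      using density_nonneg[OF _ assms(1) that] by (intro sum_mono mult_left_mono) auto
    then show ?thesis using sum_density[OF assms(1) that] by (simp flip: sum_distrib_right)
  qed
  have "L / (6 * real n) \<le> L * integral {0..1} (nearest_lower n c \<rho>)"
    using mult_left_mono[OF integral_nearest_lower_ge[OF assms(2)], of L]
    by (simp add: L_def \<rho>_def)
  also have "\<dots> = integral {0..1} (\<lambda>s. L * nearest_lower n c \<rho> s)"
    by simp
  also have "\<dots> \<le> integral {0..1} (\<lambda>s. \<Sum>i<n. \<tau> i j s * dist (p i) (seg a b j s))"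
    using lower has_integral_nearest_lower[OF \<open>0 \<le> \<rho>\<close>] integrable_density_dist[OF _ assms(1)]
    by (intro integral_le integrable_on_mult_right integrable_sum) auto
  finally show ?thesis by (simp add: L_def)
qed

lemma plan_cost_ge:
  assumes "0 < n" and len_total: "(\<Sum>j<m. dist (a j) (b j)) = 1"
  shows "1 / (6 * real n * real m) \<le> plan_cost n m p a b \<tau>"
proof -
  have "1 / (6 * real n * real m) = (1 / real m) / (6 * real n)" by simp
  also have "\<dots> \<le> (\<Sum>j<m. (dist (a j) (b j))\<^sup>2) / (6 * real n)"
    by (rule divide_right_mono[OF sum_squares_ge[OF len_total]]) simp
  also have "\<dots> = (\<Sum>j<m. dist (a j) (b j) * (dist (a j) (b j) / (6 * real n)))"
    by (simp add: sum_divide_distrib power2_eq_square)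
  also have "\<dots> \<le> (\<Sum>j<m. dist (a j) (b j) *
      integral {0..1} (\<lambda>s. \<Sum>i<n. \<tau> i j s * dist (p i) (seg a b j s)))"
    using segment_cost_ge assms(1) by (intro sum_mono mult_left_mono) auto
  also have "\<dots> = (\<Sum>j<m. \<Sum>i<n. dist (a j) (b j) *
      integral {0..1} (\<lambda>s. \<tau> i j s * dist (p i) (seg a b j s)))"
  proof (intro sum.cong refl)
    fix j assume "j \<in> {..<m}"
    then have "integral {0..1} (\<lambda>s. \<Sum>i<n. \<tau> i j s * dist (p i) (seg a b j s))
        = (\<Sum>i<n. integral {0..1} (\<lambda>s. \<tau> i j s * dist (p i) (seg a b j s)))"
      using integrable_density_dist by (intro integral_sum) auto
    then show "dist (a j) (b j) * integral {0..1} (\<lambda>s. \<Sum>i<n. \<tau> i j s * dist (p i) (seg a b j s))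
        = (\<Sum>i<n. dist (a j) (b j) * integral {0..1} (\<lambda>s. \<tau> i j s * dist (p i) (seg a b j s)))"
      by (simp add: sum_distrib_left)
  qed
  also have "\<dots> = plan_cost n m p a b \<tau>"
    unfolding plan_cost_def by (rule sum.swap)
  finally show ?thesis .
qed

end

section \<open>Restricting a plan to the pieces\<close>

locale subdivided_plan = subdivision + transport_plan
begin

definition restrict_plan :: "nat \<Rightarrow> nat \<times> nat \<times> nat \<Rightarrow> real" where
  "restrict_plan i q = (case q of (j, d, k) \<Rightarrow>
     dist (a j) (b j) * integral {sub_lo d k..sub_hi d k} (\<tau> i j))"

lemma is_dplan_restrict_plan: "is_dplan n w Q (sub_len a b) restrict_plan"
  unfolding is_dplan_def
proof (intro conjI allI impI ballI)
  fix i q assume i: "i < n" and q: "q \<in> Q"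
  obtain j d k where q_eq: "q = (j, d, k)" by (cases q) auto
  then have "j < m" "{sub_lo d k..sub_hi d k} \<subseteq> {0..1}"
    using q Q_index dyadic_ivl_subset by auto
  then show "0 \<le> restrict_plan i q"
    using integrable_on_piece[OF integrable_density[OF i] q[unfolded q_eq]] density_nonneg[OF i]
    by (auto simp: restrict_plan_def q_eq intro!: mult_nonneg_nonneg integral_nonneg)
next
  fix i assume i: "i < n"
  have "(\<Sum>q\<in>Q. restrict_plan i q)
      = (\<Sum>j<m. dist (a j) (b j) * (\<Sum>(d, k)\<in>pieces j. integral {sub_lo d k..sub_hi d k} (\<tau> i j)))"
    by (simp add: sum_Q restrict_plan_def sum_distrib_left case_prod_beta')
  also have "\<dots> = (\<Sum>j<m. dist (a j) (b j) * integral {0..1} (\<tau> i j))"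
    using integral_eq_sum_pieces integrable_density[OF i] by simp
  finally show "(\<Sum>q\<in>Q. restrict_plan i q) = w i" using mass_density[OF i] by simp
next
  fix q assume q: "q \<in> Q"
  obtain j d k where q_eq: "q = (j, d, k)" by (cases q) auto
  have j: "j < m" and sub: "{sub_lo d k..sub_hi d k} \<subseteq> {0..1}"
    using q Q_index dyadic_ivl_subset by (auto simp: q_eq)
  have "(\<Sum>i<n. integral {sub_lo d k..sub_hi d k} (\<tau> i j))
      = integral {sub_lo d k..sub_hi d k} (\<lambda>s. \<Sum>i<n. \<tau> i j s)"
    using integrable_on_piece[OF integrable_density q[unfolded q_eq]] j
    by (intro integral_sum[symmetric]) auto
  also have "\<dots> = integral {sub_lo d k..sub_hi d k} (\<lambda>s. 1)"
    using sum_density[OF j] sub by (intro integral_cong) auto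
  finally show "(\<Sum>i<n. restrict_plan i q) = sub_len a b q"
    by (simp add: q_eq restrict_plan_def sub_len_eq sub_lo_le_hi sub_hi_minus_lo
        flip: sum_distrib_left)
qed

lemma restrict_plan_term_le:
  assumes q: "(j, d, k) \<in> Q" and i: "i < n" and y: "y \<in> subseg a b (j, d, k)"
  shows "restrict_plan i (j, d, k) * dist (p i) y
    \<le> (1 + \<delta>) * (dist (a j) (b j) *
          integral {sub_lo d k..sub_hi d k} (\<lambda>s. \<tau> i j s * dist (p i) (seg a b j s)))
      + err (j, d, k) * restrict_plan i (j, d, k)"
proof -
  define I where "I = {sub_lo d k..sub_hi d k}"
  have j: "j < m" and sub: "I \<subseteq> {0..1}" using q Q_index dyadic_ivl_subset by (auto simp: I_def)
  have int_\<tau>: "\<tau> i j integrable_on I"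
    unfolding I_def by (rule integrable_on_piece[OF integrable_density[OF i j] q])
  have int_\<tau>_dist: "(\<lambda>s. \<tau> i j s * dist (p i) (seg a b j s)) integrable_on I"
    unfolding I_def by (rule integrable_on_piece[OF integrable_density_dist[OF i j] q])
  have "integral I (\<lambda>s. \<tau> i j s * dist (p i) y)
      \<le> integral I (\<lambda>s. (1 + \<delta>) * (\<tau> i j s * dist (p i) (seg a b j s)) + err (j, d, k) * \<tau> i j s)"
  proof (rule integral_le)
    fix s assume "s \<in> I"
    then have "dist (p i) y \<le> (1 + \<delta>) * dist (p i) (seg a b j s) + err (j, d, k)"
      using dist_le_on_piece[OF q i y seg_mem_subseg] by (simp add: I_def)
    then have "\<tau> i j s * dist (p i) y
        \<le> \<tau> i j s * ((1 + \<delta>) * dist (p i) (seg a b j s) + err (j, d, k))"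
      using density_nonneg[OF i j] sub \<open>s \<in> I\<close> by (intro mult_left_mono) auto
    then show "\<tau> i j s * dist (p i) y
        \<le> (1 + \<delta>) * (\<tau> i j s * dist (p i) (seg a b j s)) + err (j, d, k) * \<tau> i j s"
      by (simp add: algebra_simps)
  next
    show "(\<lambda>s. \<tau> i j s * dist (p i) y) integrable_on I"
      using integrable_on_mult_left[OF int_\<tau>] by simp
    show "(\<lambda>s. (1 + \<delta>) * (\<tau> i j s * dist (p i) (seg a b j s)) + err (j, d, k) * \<tau> i j s)
        integrable_on I"
      using int_\<tau> int_\<tau>_dist by (intro integrable_add integrable_on_mult_right)
  qed
  also have "\<dots> = (1 + \<delta>) * integral I (\<lambda>s. \<tau> i j s * dist (p i) (seg a b j s))
      + err (j, d, k) * integral I (\<tau> i j)"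
    using int_\<tau> int_\<tau>_dist by (simp add: integral_add integrable_on_mult_right)
  finally have "dist (a j) (b j) * (integral I (\<tau> i j) * dist (p i) y)
      \<le> dist (a j) (b j) * ((1 + \<delta>) * integral I (\<lambda>s. \<tau> i j s * dist (p i) (seg a b j s))
        + err (j, d, k) * integral I (\<tau> i j))"
    by (intro mult_left_mono) simp_all
  then show ?thesis by (simp add: restrict_plan_def I_def algebra_simps)
qed

lemma dplan_cost_restrict_plan_le:
  assumes t_on: "\<forall>q\<in>Q. t q \<in> subseg a b q"
  shows "dplan_cost n p Q t restrict_plan
    \<le> (1 + \<delta>) * plan_cost n m p a b \<tau> + (\<Sum>q\<in>Q. err q * sub_len a b q)"
proof -
  define C where "C i q = (case q of (j, d, k) \<Rightarrow> dist (a j) (b j) *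
      integral {sub_lo d k..sub_hi d k} (\<lambda>s. \<tau> i j s * dist (p i) (seg a b j s)))" for i q
  have "dplan_cost n p Q t restrict_plan
      \<le> (\<Sum>i<n. \<Sum>q\<in>Q. (1 + \<delta>) * C i q + err q * restrict_plan i q)"
    unfolding dplan_cost_def C_def using restrict_plan_term_le t_on
    by (intro sum_mono) (auto simp: case_prod_beta')
  also have "\<dots> = (1 + \<delta>) * (\<Sum>i<n. \<Sum>q\<in>Q. C i q) + (\<Sum>i<n. \<Sum>q\<in>Q. err q * restrict_plan i q)"
    by (simp add: sum.distrib sum_distrib_left)
  also have "(\<Sum>i<n. \<Sum>q\<in>Q. err q * restrict_plan i q) = (\<Sum>q\<in>Q. err q * (\<Sum>i<n. restrict_plan i q))"
    by (subst sum.swap) (simp add: sum_distrib_left)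
  also have "(\<Sum>i<n. \<Sum>q\<in>Q. C i q) = plan_cost n m p a b \<tau>"
    unfolding plan_cost_def sum_Q
  proof (intro sum.cong refl)
    fix i j assume "i \<in> {..<n}" "j \<in> {..<m}"
    then show "(\<Sum>(d, k)\<in>pieces j. C i (j, d, k)) = dist (a j) (b j) *
        integral {0..1} (\<lambda>s. \<tau> i j s * dist (p i) (seg a b j s))"
      using integral_eq_sum_pieces[OF _ integrable_density_dist]
      by (simp add: C_def sum_distrib_left case_prod_beta')
  qed
  also have "(\<Sum>q\<in>Q. err q * (\<Sum>i<n. restrict_plan i q)) = (\<Sum>q\<in>Q. err q * sub_len a b q)"
    using is_dplan_restrict_plan unfolding is_dplan_def by simp
  finally show ?thesis .
qed

end

section \<open>The approximation ratio\<close>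

lemma approximation_arith:
  fixes \<delta> C E z :: real
  assumes "0 < \<delta>" "\<delta> \<le> 1/4" "0 \<le> z" "0 \<le> E" "E \<le> 4 * \<delta>\<^sup>2 * z" "z / 6 \<le> C"
  shows "(1 + \<delta>) * ((1 + \<delta>) * C + E) + E \<le> (1 + 17 * \<delta>) * C"
proof -
  have "(2 + \<delta>) * E \<le> 9 * \<delta>\<^sup>2 * z"
    using assms mult_mono[of "2 + \<delta>" "9/4" E "4 * \<delta>\<^sup>2 * z"] by (simp add: mult_ac)
  also have "\<dots> \<le> (15 * \<delta> - \<delta>\<^sup>2) * (z / 6)"
  proof -
    have "55 * \<delta> * (\<delta> * z) \<le> 15 * (\<delta> * z)"
      using assms(1-3) by (intro mult_right_mono) auto
    then show ?thesis by (simp add: power2_eq_square algebra_simps)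
  qed
  also have "\<dots> \<le> (15 * \<delta> - \<delta>\<^sup>2) * C"
    using assms by (intro mult_left_mono) (auto simp: power2_eq_square)
  finally show ?thesis by (simp add: power2_eq_square algebra_simps)
qed

context subdivided_plan
begin

lemma plan_cost_spread_le_ratio:
  assumes "\<delta> \<le> 1/4" and len_total: "(\<Sum>j<m. dist (a j) (b j)) = 1"
    and t_on: "\<forall>q\<in>Q. t q \<in> subseg a b q" and \<nu>: "is_dplan n w Q (sub_len a b) \<nu>"
    and \<nu>_opt: "\<forall>\<nu>'. is_dplan n w Q (sub_len a b) \<nu>' \<longrightarrow>
      dplan_cost n p Q t \<nu> \<le> dplan_cost n p Q t \<nu>'"
  shows "plan_cost n m p a b (spread a b Q \<nu>) \<le> (1 + 17 * \<delta>) * plan_cost n m p a b \<tau>"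
proof -
  define E where "E = (\<Sum>q\<in>Q. err q * sub_len a b q)"
  have "plan_cost n m p a b (spread a b Q \<nu>) \<le> (1 + \<delta>) * dplan_cost n p Q t \<nu> + E"
    unfolding E_def by (rule plan_cost_spread_le[OF t_on \<nu>])
  also have "dplan_cost n p Q t \<nu> \<le> dplan_cost n p Q t restrict_plan"
    using \<nu>_opt is_dplan_restrict_plan by blast
  also have "\<dots> \<le> (1 + \<delta>) * plan_cost n m p a b \<tau> + E"
    unfolding E_def by (rule dplan_cost_restrict_plan_le[OF t_on])
  finally have "plan_cost n m p a b (spread a b Q \<nu>)
      \<le> (1 + \<delta>) * ((1 + \<delta>) * plan_cost n m p a b \<tau> + E) + E"
    using delta_pos by (simp add: mult_left_mono)
  also have "\<dots> \<le> (1 + 17 * \<delta>) * plan_cost n m p a b \<tau>"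
    using delta_pos assms(1) sum_err_le plan_cost_ge[OF n_pos len_total]
    by (intro approximation_arith[where z = "1 / (real n * real m)"])
      (auto simp: E_def err_nonneg sub_len_nonneg sum_nonneg)
  finally show ?thesis .
qed

end

lemma is_plan_const:
  assumes "\<forall>i<n. 0 < w i" "(\<Sum>i<n. w i) = 1" "(\<Sum>j<m. dist (a j) (b j)) = 1"
  shows "is_plan n m w a b (\<lambda>i j s. w i)"
proof -
  have "w i \<le> 1" if "i < n" for i
    using member_le_sum[of i "{..<n}" w] assms(1,2) that by (simp add: less_imp_le)
  then show ?thesis
    using assms by (simp add: is_plan_def less_imp_le integrable_const_ivl flip: sum_distrib_right)
qed

lemma le_mult_Inf:
  fixes x K :: real
  assumes "S \<noteq> {}" "0 < K" "\<forall>c\<in>S. x \<le> K * c"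
  shows "x \<le> K * Inf S"
proof -
  have "x / K \<le> Inf S"
    using assms by (intro cInf_greatest) (auto simp: divide_le_eq mult.commute)
  then show ?thesis using assms(2) by (simp add: divide_le_eq mult.commute)
qed

theorem theorem2:
  fixes n m :: nat and p :: "nat \<Rightarrow> real^2" and w :: "nat \<Rightarrow> real"
    and a b :: "nat \<Rightarrow> real^2" and \<delta> :: real
    and t :: "nat \<times> nat \<times> nat \<Rightarrow> real^2"
    and \<nu> :: "nat \<Rightarrow> nat \<times> nat \<times> nat \<Rightarrow> real"
  assumes w_pos: "\<forall>i<n. 0 < w i"
    and w_total: "(\<Sum>i<n. w i) = 1"
    and len_total: "(\<Sum>j<m. dist (a j) (b j)) = 1"
    and delta: "0 < \<delta>" "\<delta> \<le> 1/4"
    and t_on: "\<forall>q\<in>Qset n m p a b \<delta>. t q \<in> subseg a b q"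
    and nu_plan: "is_dplan n w (Qset n m p a b \<delta>) (sub_len a b) \<nu>"
    and nu_opt: "\<forall>\<nu>'. is_dplan n w (Qset n m p a b \<delta>) (sub_len a b) \<nu>' \<longrightarrow>
                   dplan_cost n p (Qset n m p a b \<delta>) t \<nu> \<le> dplan_cost n p (Qset n m p a b \<delta>) t \<nu>'"
  shows "plan_cost n m p a b (spread a b (Qset n m p a b \<delta>) \<nu>) \<le> (1 + 17 * \<delta>) * emd n m p w a b"
proof -
  have "0 < n" using w_total by (cases n) auto
  interpret subdivision n m p a b \<delta>
    using \<open>0 < n\<close> delta finite_if_dplan[OF nu_plan \<open>0 < n\<close>] w_pos by unfold_locales auto
  have "plan_cost n m p a b (spread a b Q \<nu>) \<le> (1 + 17 * \<delta>) * plan_cost n m p a b \<tau>"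
    if "is_plan n m w a b \<tau>" for \<tau>
  proof -
    interpret subdivided_plan n m p a b \<delta> w \<tau> by unfold_locales (rule that)
    show ?thesis by (rule plan_cost_spread_le_ratio[OF delta(2) len_total t_on nu_plan nu_opt])
  qed
  moreover have "is_plan n m w a b (\<lambda>i j s. w i)"
    by (rule is_plan_const[OF w_pos w_total len_total])
  ultimately show ?thesis unfolding emd_def using delta by (intro le_mult_Inf) auto
qed

end
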